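(* Fix parameters $D_0>0$, $\alpha>0$, $p^a\ge 0$ and a weight $\gamma\in(0,1)$. For prices $p^s,p^c,p^d\in\mathbb{R}$ let $d(p^s,p^c)=\max\{D_0-\alpha(p^s+p^c),0\}$, $U_{ISP}=d(p^s,p^c)\,(p^s+p^d)$ and $U_{CP}=d(p^s,p^c)\,(p^c+p^a-p^d)$. In the ex ante regulation game, the following holds. (a) For every $p^d\in\mathbb{R}$, the simultaneous pricing game (ISP chooses $p^s$, CP chooses $p^c$) has exactly one pure-strategy Nash equilibrium with strictly positive demand, namely $$p^s=\frac{D_0+\alpha p^a}{3\alpha}-p^d,\qquad p^c=\frac{D_0-2\alpha p^a}{3\alpha}+p^d .$$ At this equilibrium: - the net internaut price is $p^s+p^c=\frac{2D_0-\alpha p^a}{3\alpha}$, independent of $p^d$; - the demand is $\frac{D_0+\alpha p^a}{3}>0$; - $U_{ISP}=U_{CP}=\frac{(D_0+\alpha p^a)^2}{9\alpha}$. Consequently $U_{ISP}^{\gamma}U_{CP}^{1-\gamma}$ at this equilibrium does not depend on $p^d$, so every $p^d\in\mathbb{R}$ is an optimal choice of the regulator. The equilibrium is therefore unique up to a free choice of $p^d$, and a payment $p^d$ lowers $p^s$ and raises $p^c$ by exactly $p^d$. (b) For each fixed $p^d$, a profile $(p^s,p^c)$ is a pure-strategy Nash equilibrium of the pricing game with zero demand if and only if $$p^s\ge D_0/\alpha+p^a-p^d\quad\text{and}\quad p^c\ge D_0/\alpha+p^d.$$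
   Context: Single ISP, single content provider (CP) model. - $p^s$ is the price per unit demand paid by internauts to the ISP, and $p^c$ the price per unit demand paid by internauts to the CP. Either may be negative. - $p^d$ is the payment per unit demand from the CP to the ISP, and may be negative. - $p^a\ge0$ is the advertising revenue per unit demand earned by the CP. Ex ante regulation game: 1. A regulator first sets $p^d$. 2. Then the ISP and the CP simultaneously choose $p^s$ and $p^c$, with payoffs $U_{ISP}$ and $U_{CP}$. 3. Internauts generate demand $d(p^s,p^c)$. The regulator chooses $p^d$ to maximize $U_{ISP}^{\gamma}\times U_{CP}^{1-\gamma}$, where $U_{ISP}$ and $U_{CP}$ are evaluated at the pure-strategy Nash equilibrium of the pricing game induced by that $p^d$. *)

theory Defs
  imports Complex_Main
begin

definition demand :: "real \<Rightarrow> real \<Rightarrow> real \<Rightarrow> real \<Rightarrow> real" where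
  "demand D0 \<alpha> ps pc = max (D0 - \<alpha> * (ps + pc)) 0"

definition U_ISP :: "real \<Rightarrow> real \<Rightarrow> real \<Rightarrow> real \<Rightarrow> real \<Rightarrow> real" where
  "U_ISP D0 \<alpha> pd ps pc = demand D0 \<alpha> ps pc * (ps + pd)"

definition U_CP :: "real \<Rightarrow> real \<Rightarrow> real \<Rightarrow> real \<Rightarrow> real \<Rightarrow> real \<Rightarrow> real" where
  "U_CP D0 \<alpha> pa pd ps pc = demand D0 \<alpha> ps pc * (pc + pa - pd)"

definition is_NE :: "real \<Rightarrow> real \<Rightarrow> real \<Rightarrow> real \<Rightarrow> real \<Rightarrow> real \<Rightarrow> bool" where
  "is_NE D0 \<alpha> pa pd ps pc \<longleftrightarrow>
     (\<forall>ps'. U_ISP D0 \<alpha> pd ps' pc \<le> U_ISP D0 \<alpha> pd ps pc) \<and>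
     (\<forall>pc'. U_CP D0 \<alpha> pa pd ps pc' \<le> U_CP D0 \<alpha> pa pd ps pc)"

definition reg_obj :: "real \<Rightarrow> real \<Rightarrow> real \<Rightarrow> real \<Rightarrow> real \<Rightarrow> real" where
  "reg_obj D0 \<alpha> pa \<gamma> pd =
     (let (ps, pc) = (THE (ps, pc). is_NE D0 \<alpha> pa pd ps pc \<and> demand D0 \<alpha> ps pc > 0)
      in U_ISP D0 \<alpha> pd ps pc powr \<gamma> * U_CP D0 \<alpha> pa pd ps pc powr (1 - \<gamma>))"

end

theory Submission
  imports Defs
begin

text \<open>Each firm's payoff has the form \<open>max (B - \<alpha> z) 0 * z\<close> in its own margin \<open>z\<close>
  (\<open>ps + pd\<close> for the ISP, \<open>pc + pa - pd\<close> for the CP), where the intercept \<open>B\<close> is what the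
  other firm's price leaves of \<open>D0\<close>. Such a truncated linear revenue has supremum
  \<open>(max B 0)\<^sup>2 / (4 \<alpha>)\<close>; it is attained with positive demand exactly at \<open>z = B / (2 \<alpha>)\<close>, and
  otherwise only if \<open>B \<le> 0\<close>. A positive-demand equilibrium therefore solves a linear system
  in which \<open>pd\<close> only translates \<open>ps\<close> and \<open>pc\<close> in opposite directions, leaving both margins,
  the demand and both payoffs unchanged; so the regulator's objective does not depend on \<open>pd\<close>.\<close>

lemma truncated_revenue_le:
  fixes \<alpha> B z :: real
  assumes "\<alpha> > 0"
  shows "max (B - \<alpha> * z) 0 * z \<le> (max B 0)\<^sup>2 / (4 * \<alpha>)"
proof -
  consider "B - \<alpha> * z \<le> 0" | "B - \<alpha> * z > 0" "z \<le> 0" | "B - \<alpha> * z > 0" "z > 0"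
    by linarith
  then show ?thesis
  proof cases
    case 1
    then show ?thesis
      using assms by simp
  next
    case 2
    then have "max (B - \<alpha> * z) 0 * z \<le> 0"
      by (simp add: mult_nonneg_nonpos)
    also have "0 \<le> (max B 0)\<^sup>2 / (4 * \<alpha>)"
      using assms by simp
    finally show ?thesis .
  next
    case 3
    moreover have "\<alpha> * z > 0"
      using 3 assms by simp
    ultimately have "B > 0"
      by linarith
    have "4 * \<alpha> * ((B - \<alpha> * z) * z) = B\<^sup>2 - (B - 2 * \<alpha> * z)\<^sup>2"
      by (simp add: power2_eq_square algebra_simps)
    also have "\<dots> \<le> (max B 0)\<^sup>2"
      using \<open>B > 0\<close> by simp
    finally show ?thesis
      using 3 assms by (simp add: le_divide_eq mult.commute)
  qed
qed

lemma truncated_revenue_peak: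
  fixes \<alpha> B :: real
  assumes "\<alpha> > 0"
  defines "z \<equiv> max B 0 / (2 * \<alpha>)"
  shows "max (B - \<alpha> * z) 0 * z = (max B 0)\<^sup>2 / (4 * \<alpha>)"
  using assms by (cases "B > 0") (simp_all add: power2_eq_square field_simps)

lemma truncated_revenue_maximizer_iff:
  fixes \<alpha> B z :: real
  assumes "\<alpha> > 0"
  shows "(\<forall>y. max (B - \<alpha> * y) 0 * y \<le> max (B - \<alpha> * z) 0 * z) \<longleftrightarrow>
         (if B - \<alpha> * z > 0 then B = 2 * \<alpha> * z else B \<le> 0)"
proof -
  have "(\<forall>y. max (B - \<alpha> * y) 0 * y \<le> max (B - \<alpha> * z) 0 * z) \<longleftrightarrow>
        max (B - \<alpha> * z) 0 * z = (max B 0)\<^sup>2 / (4 * \<alpha>)"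
    using truncated_revenue_le[OF assms] truncated_revenue_peak[OF assms]
    by (metis order_antisym)
  also have "\<dots> \<longleftrightarrow> (if B - \<alpha> * z > 0 then B = 2 * \<alpha> * z else B \<le> 0)"
  proof (cases "B - \<alpha> * z > 0")
    case True
    have "(B - \<alpha> * z) * z = (max B 0)\<^sup>2 / (4 * \<alpha>) \<longleftrightarrow> B = 2 * \<alpha> * z"
    proof
      assume peak: "(B - \<alpha> * z) * z = (max B 0)\<^sup>2 / (4 * \<alpha>)"
      have "B > 0"
      proof (rule ccontr)
        assume "\<not> B > 0"
        then have "\<alpha> * z < 0" and "max B 0 = 0"
          using True by auto
        then have "z < 0"
          using assms by (simp add: mult_less_0_iff)
        then show False
          using peak True \<open>max B 0 = 0\<close> by (simp add: mult_pos_neg)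
      qed
      have "4 * \<alpha> * ((B - \<alpha> * z) * z) = B\<^sup>2 - (B - 2 * \<alpha> * z)\<^sup>2"
        by (simp add: power2_eq_square algebra_simps)
      then have "(B - 2 * \<alpha> * z)\<^sup>2 = 0"
        using peak \<open>B > 0\<close> assms by simp
      then show "B = 2 * \<alpha> * z"
        by simp
    next
      assume "B = 2 * \<alpha> * z"
      moreover have "B > 0"
        using True calculation assms by (simp add: zero_less_mult_iff)
      ultimately show "(B - \<alpha> * z) * z = (max B 0)\<^sup>2 / (4 * \<alpha>)"
        using assms by (simp add: power2_eq_square field_simps)
    qed
    with True show ?thesis
      by simp
  next
    case False
    then show ?thesis
      using assms by (simp add: max_def)
  qed
  finally show ?thesis .
qed

lemma best_response_iff:
  fixes \<alpha> D0 c m x :: real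
  assumes "\<alpha> > 0"
  shows "(\<forall>x'. max (D0 - \<alpha> * (x' + c)) 0 * (x' + m) \<le> max (D0 - \<alpha> * (x + c)) 0 * (x + m)) \<longleftrightarrow>
         (if D0 - \<alpha> * (x + c) > 0 then D0 - \<alpha> * (x + c) = \<alpha> * (x + m) else D0 \<le> \<alpha> * (c - m))"
proof -
  define B where "B = D0 - \<alpha> * (c - m)"
  have shift: "D0 - \<alpha> * (y + c) = B - \<alpha> * (y + m)" for y
    by (simp add: B_def algebra_simps)
  have "(\<forall>x'. max (D0 - \<alpha> * (x' + c)) 0 * (x' + m) \<le> max (D0 - \<alpha> * (x + c)) 0 * (x + m)) \<longleftrightarrow>
        (\<forall>y. max (B - \<alpha> * y) 0 * y \<le> max (B - \<alpha> * (x + m)) 0 * (x + m))"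
    unfolding shift by (metis diff_add_cancel)
  also have "\<dots> \<longleftrightarrow> (if D0 - \<alpha> * (x + c) > 0 then D0 - \<alpha> * (x + c) = \<alpha> * (x + m) else D0 \<le> \<alpha> * (c - m))"
    unfolding truncated_revenue_maximizer_iff[OF assms] shift by (auto simp: B_def)
  finally show ?thesis .
qed

lemma U_ISP_eq: "U_ISP D0 \<alpha> pd ps pc = max (D0 - \<alpha> * (ps + pc)) 0 * (ps + pd)"
  by (simp add: U_ISP_def demand_def)

lemma U_CP_eq: "U_CP D0 \<alpha> pa pd ps pc = max (D0 - \<alpha> * (pc + ps)) 0 * (pc + (pa - pd))"
  by (simp add: U_CP_def demand_def add.commute add_diff_eq)

lemma is_NE_iff:
  assumes "\<alpha> > 0"
  shows "is_NE D0 \<alpha> pa pd ps pc \<longleftrightarrow>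
         (if demand D0 \<alpha> ps pc > 0
          then D0 - \<alpha> * (ps + pc) = \<alpha> * (ps + pd) \<and> D0 - \<alpha> * (ps + pc) = \<alpha> * (pc + (pa - pd))
          else D0 \<le> \<alpha> * (pc - pd) \<and> D0 \<le> \<alpha> * (ps - (pa - pd)))"
  unfolding is_NE_def U_ISP_eq U_CP_eq best_response_iff[OF assms]
  by (simp add: demand_def add.commute)

lemma equilibrium_outcome:
  fixes D0 \<alpha> pa pd ps pc :: real
  assumes "\<alpha> > 0" and "D0 > 0" and "pa \<ge> 0"
    and ps_def: "ps = (D0 + \<alpha> * pa) / (3 * \<alpha>) - pd"
    and pc_def: "pc = (D0 - 2 * \<alpha> * pa) / (3 * \<alpha>) + pd"
  shows "ps + pc = (2 * D0 - \<alpha> * pa) / (3 * \<alpha>)"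
    and "demand D0 \<alpha> ps pc = (D0 + \<alpha> * pa) / 3"
    and "demand D0 \<alpha> ps pc > 0"
    and "U_ISP D0 \<alpha> pd ps pc = (D0 + \<alpha> * pa)\<^sup>2 / (9 * \<alpha>)"
    and "U_CP D0 \<alpha> pa pd ps pc = (D0 + \<alpha> * pa)\<^sup>2 / (9 * \<alpha>)"
proof -
  show sum: "ps + pc = (2 * D0 - \<alpha> * pa) / (3 * \<alpha>)"
    unfolding ps_def pc_def using assms(1) by (simp add: field_simps)
  have "D0 + \<alpha> * pa > 0"
    using assms(1-3) by (simp add: add_pos_nonneg)
  moreover have "D0 - \<alpha> * (ps + pc) = (D0 + \<alpha> * pa) / 3"
    unfolding ps_def pc_def using assms(1) by (simp add: field_simps)
  ultimately show demand: "demand D0 \<alpha> ps pc = (D0 + \<alpha> * pa) / 3"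
    by (simp add: demand_def)
  then show "demand D0 \<alpha> ps pc > 0"
    using \<open>D0 + \<alpha> * pa > 0\<close> by simp
  have "ps + pd = (D0 + \<alpha> * pa) / (3 * \<alpha>)" and "pc + pa - pd = (D0 + \<alpha> * pa) / (3 * \<alpha>)"
    unfolding ps_def pc_def using assms(1) by (simp_all add: field_simps)
  then show "U_ISP D0 \<alpha> pd ps pc = (D0 + \<alpha> * pa)\<^sup>2 / (9 * \<alpha>)"
    and "U_CP D0 \<alpha> pa pd ps pc = (D0 + \<alpha> * pa)\<^sup>2 / (9 * \<alpha>)"
    by (simp_all add: U_ISP_def U_CP_def demand power2_eq_square)
qed

lemma positive_demand_NE_iff:
  fixes D0 \<alpha> pa pd ps pc :: real
  assumes "\<alpha> > 0" and "D0 > 0" and "pa \<ge> 0"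
  shows "(is_NE D0 \<alpha> pa pd ps pc \<and> demand D0 \<alpha> ps pc > 0) \<longleftrightarrow>
         (ps = (D0 + \<alpha> * pa) / (3 * \<alpha>) - pd \<and> pc = (D0 - 2 * \<alpha> * pa) / (3 * \<alpha>) + pd)"
proof
  assume "is_NE D0 \<alpha> pa pd ps pc \<and> demand D0 \<alpha> ps pc > 0"
  then have "D0 - \<alpha> * (ps + pc) = \<alpha> * (ps + pd)" and "D0 - \<alpha> * (ps + pc) = \<alpha> * (pc + (pa - pd))"
    using is_NE_iff[OF assms(1)] by auto
  then have "\<alpha> * (ps + pd) * 3 = D0 + \<alpha> * pa" and "\<alpha> * (pc - pd) * 3 = D0 - 2 * \<alpha> * pa"
    by (simp_all add: algebra_simps)
  then show "ps = (D0 + \<alpha> * pa) / (3 * \<alpha>) - pd \<and> pc = (D0 - 2 * \<alpha> * pa) / (3 * \<alpha>) + pd"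
    using assms(1) by (simp add: field_simps)
next
  assume "ps = (D0 + \<alpha> * pa) / (3 * \<alpha>) - pd \<and> pc = (D0 - 2 * \<alpha> * pa) / (3 * \<alpha>) + pd"
  then have ps: "ps = (D0 + \<alpha> * pa) / (3 * \<alpha>) - pd" and pc: "pc = (D0 - 2 * \<alpha> * pa) / (3 * \<alpha>) + pd"
    by simp_all
  have "demand D0 \<alpha> ps pc > 0"
    using equilibrium_outcome(3)[OF assms ps pc] .
  moreover have "D0 - \<alpha> * (ps + pc) = \<alpha> * (ps + pd) \<and> D0 - \<alpha> * (ps + pc) = \<alpha> * (pc + (pa - pd))"
    unfolding ps pc using assms(1) by (simp add: field_simps)
  ultimately show "is_NE D0 \<alpha> pa pd ps pc \<and> demand D0 \<alpha> ps pc > 0"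
    by (metis is_NE_iff[OF assms(1)])
qed

lemma zero_demand_NE_iff:
  fixes D0 \<alpha> pa pd ps pc :: real
  assumes "\<alpha> > 0" and "D0 > 0" and "pa \<ge> 0"
  shows "(is_NE D0 \<alpha> pa pd ps pc \<and> demand D0 \<alpha> ps pc = 0) \<longleftrightarrow>
         (ps \<ge> D0 / \<alpha> + pa - pd \<and> pc \<ge> D0 / \<alpha> + pd)"
proof -
  have thresholds: "D0 \<le> \<alpha> * (pc - pd) \<longleftrightarrow> pc \<ge> D0 / \<alpha> + pd"
    "D0 \<le> \<alpha> * (ps - (pa - pd)) \<longleftrightarrow> ps \<ge> D0 / \<alpha> + pa - pd"
    using assms(1) by (simp_all add: field_simps)
  have "demand D0 \<alpha> ps pc = 0"
    if "D0 \<le> \<alpha> * (pc - pd)" and "D0 \<le> \<alpha> * (ps - (pa - pd))"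
  proof -
    have "\<alpha> * (ps + pc) \<ge> 2 * D0 + \<alpha> * pa"
      using that by (simp add: algebra_simps)
    moreover have "\<alpha> * pa \<ge> 0"
      using assms(1,3) by simp
    ultimately show ?thesis
      using assms(2) by (simp add: demand_def)
  qed
  moreover have "demand D0 \<alpha> ps pc = 0 \<longleftrightarrow> \<not> demand D0 \<alpha> ps pc > 0"
    by (simp add: demand_def max_def)
  ultimately show ?thesis
    using is_NE_iff[OF assms(1), of D0 pa pd ps pc] thresholds by auto
qed

lemma reg_obj_eq:
  fixes D0 \<alpha> pa \<gamma> pd :: real
  assumes "\<alpha> > 0" and "D0 > 0" and "pa \<ge> 0"
  shows "reg_obj D0 \<alpha> pa \<gamma> pd = (D0 + \<alpha> * pa)\<^sup>2 / (9 * \<alpha>)"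
proof -
  define ps where "ps = (D0 + \<alpha> * pa) / (3 * \<alpha>) - pd"
  define pc where "pc = (D0 - 2 * \<alpha> * pa) / (3 * \<alpha>) + pd"
  have "(THE (ps, pc). is_NE D0 \<alpha> pa pd ps pc \<and> demand D0 \<alpha> ps pc > 0) = (ps, pc)"
    using positive_demand_NE_iff[OF assms] by (intro the_equality) (auto simp: ps_def pc_def)
  moreover have "v powr \<gamma> * v powr (1 - \<gamma>) = v" if "v = (D0 + \<alpha> * pa)\<^sup>2 / (9 * \<alpha>)" for v
    using that assms(1) by (simp add: powr_add [symmetric])
  ultimately show ?thesis
    using equilibrium_outcome(4,5)[OF assms ps_def pc_def] by (simp add: reg_obj_def)
qed

theorem theorem1:
  fixes D0 \<alpha> pa \<gamma> :: real
  assumes "D0 > 0" and "\<alpha> > 0" and "pa \<ge> 0" and "0 < \<gamma>" and "\<gamma> < 1"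
  shows
    "(\<forall>pd ps pc. (is_NE D0 \<alpha> pa pd ps pc \<and> demand D0 \<alpha> ps pc > 0) \<longleftrightarrow>
        (ps = (D0 + \<alpha> * pa) / (3 * \<alpha>) - pd \<and> pc = (D0 - 2 * \<alpha> * pa) / (3 * \<alpha>) + pd))
   \<and> (\<forall>pd. let ps = (D0 + \<alpha> * pa) / (3 * \<alpha>) - pd;
                pc = (D0 - 2 * \<alpha> * pa) / (3 * \<alpha>) + pd
            in ps + pc = (2 * D0 - \<alpha> * pa) / (3 * \<alpha>)
             \<and> demand D0 \<alpha> ps pc = (D0 + \<alpha> * pa) / 3
             \<and> demand D0 \<alpha> ps pc > 0
             \<and> U_ISP D0 \<alpha> pd ps pc = (D0 + \<alpha> * pa)\<^sup>2 / (9 * \<alpha>)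
             \<and> U_CP D0 \<alpha> pa pd ps pc = (D0 + \<alpha> * pa)\<^sup>2 / (9 * \<alpha>))
   \<and> (\<forall>pd pd'. reg_obj D0 \<alpha> pa \<gamma> pd = reg_obj D0 \<alpha> pa \<gamma> pd')
   \<and> (\<forall>pd pd'. reg_obj D0 \<alpha> pa \<gamma> pd' \<le> reg_obj D0 \<alpha> pa \<gamma> pd)
   \<and> (\<forall>pd ps pc. (is_NE D0 \<alpha> pa pd ps pc \<and> demand D0 \<alpha> ps pc = 0) \<longleftrightarrow>
        (ps \<ge> D0 / \<alpha> + pa - pd \<and> pc \<ge> D0 / \<alpha> + pd))"
proof (intro conjI allI)
  fix pd ps pc
  show "(is_NE D0 \<alpha> pa pd ps pc \<and> demand D0 \<alpha> ps pc > 0) \<longleftrightarrow>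
        (ps = (D0 + \<alpha> * pa) / (3 * \<alpha>) - pd \<and> pc = (D0 - 2 * \<alpha> * pa) / (3 * \<alpha>) + pd)"
    and "(is_NE D0 \<alpha> pa pd ps pc \<and> demand D0 \<alpha> ps pc = 0) \<longleftrightarrow>
        (ps \<ge> D0 / \<alpha> + pa - pd \<and> pc \<ge> D0 / \<alpha> + pd)"
    using positive_demand_NE_iff zero_demand_NE_iff assms by simp_all
next
  fix pd
  show "let ps = (D0 + \<alpha> * pa) / (3 * \<alpha>) - pd;
            pc = (D0 - 2 * \<alpha> * pa) / (3 * \<alpha>) + pd
        in ps + pc = (2 * D0 - \<alpha> * pa) / (3 * \<alpha>)
         \<and> demand D0 \<alpha> ps pc = (D0 + \<alpha> * pa) / 3
         \<and> demand D0 \<alpha> ps pc > 0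
         \<and> U_ISP D0 \<alpha> pd ps pc = (D0 + \<alpha> * pa)\<^sup>2 / (9 * \<alpha>)
         \<and> U_CP D0 \<alpha> pa pd ps pc = (D0 + \<alpha> * pa)\<^sup>2 / (9 * \<alpha>)"
    using equilibrium_outcome[OF assms(2,1,3) refl refl] by (simp add: Let_def)
next
  fix pd pd'
  show "reg_obj D0 \<alpha> pa \<gamma> pd = reg_obj D0 \<alpha> pa \<gamma> pd'"
    and "reg_obj D0 \<alpha> pa \<gamma> pd' \<le> reg_obj D0 \<alpha> pa \<gamma> pd"
    using reg_obj_eq[OF assms(2,1,3)] by simp_all
qed

end
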